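(* Let $n\in\mathbb Z_{>0}$, let $W:=V^{\oplus n}$ and $W_*:=V_*^{\oplus n}$ with the pairing $\langle (v_i),(w_i)\rangle=\sum_i\langle v_i,w_i\rangle$, and let $\varphi:\mathfrak{gl}(V,V_* )\to\mathfrak{gl}(W,W_* )$ be the $n$-fold diagonal map $A\mapsto \mathrm{diag}(A,\dots,A)$. Then the normalizer of $\varphi(\mathfrak{sl}(V,V_* ))$ in $\mathfrak{gl}(W,W_* )$ equals $\varphi(\mathfrak{gl}(V,V_* ))$. Moreover, if $V_*$ is identified with $V$ so that the pairing becomes a nondegenerate symmetric (resp. antisymmetric) form on $V$, then $\varphi(\mathfrak{so}(V))$ (resp. $\varphi(\mathfrak{sp}(V))$) is self-normalizing in $\mathfrak{gl}(W,W_* )$.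
   Context: Ground field $\mathbb C$. $V,V_*$ are countable-dimensional with nondegenerate pairing $\langle\cdot,\cdot\rangle$. $\mathfrak{gl}(V,V_* )$ is the Lie algebra of the associative algebra $V\otimes V_*$ with $(v\otimes w)(v'\otimes w')=\langle v',w\rangle v\otimes w'$; $\mathfrak{sl}(V,V_* )=[\mathfrak{gl}(V,V_* ),\mathfrak{gl}(V,V_* )]$ (the kernel of the trace $v\otimes w\mapsto\langle v,w\rangle$). Given a nondegenerate symmetric form on $V$, $\mathfrak{so}(V)$ denotes the subalgebra $\bigwedge^2V\subset\mathfrak{gl}(V,V)$ (spanned by $v\otimes w-w\otimes v$); given a nondegenerate antisymmetric form, $\mathfrak{sp}(V)$ denotes the subalgebra $\mathrm{Sym}^2V\subset\mathfrak{gl}(V,V)$ (spanned by $v\otimes w+w\otimes v$). Elements of $\mathfrak{gl}(W,W_* )$ are viewed as $n\times n$ block matrices with entries in $\mathfrak{gl}(V,V_* )$. *)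

theory Defs
  imports Main "HOL.Complex"
begin

text \<open>Model: V and V_* are both realised as the space FS of finitely supported
  complex sequences (every countably-infinite-dimensional complex vector space is
  isomorphic to it); the pairing is an arbitrary nondegenerate bilinear form on FS x FS.\<close>

type_synonym vec = "nat \<Rightarrow> complex"
type_synonym op = "vec \<Rightarrow> vec"
type_synonym bmat = "nat \<Rightarrow> nat \<Rightarrow> op"

definition FS :: "vec set" where
  "FS = {f. finite {i. f i \<noteq> 0}}"

definition bilinear_pairing :: "(vec \<Rightarrow> vec \<Rightarrow> complex) \<Rightarrow> bool" where
  "bilinear_pairing p \<longleftrightarrow>
     (\<forall>a x y z. x \<in> FS \<longrightarrow> y \<in> FS \<longrightarrow> z \<in> FS \<longrightarrow>
        p (\<lambda>i. a * x i + y i) z = a * p x z + p y z \<and>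
        p z (\<lambda>i. a * x i + y i) = a * p z x + p z y)"

definition nondegenerate :: "(vec \<Rightarrow> vec \<Rightarrow> complex) \<Rightarrow> bool" where
  "nondegenerate p \<longleftrightarrow>
     (\<forall>x\<in>FS. (\<forall>y\<in>FS. p x y = 0) \<longrightarrow> x = (\<lambda>i. 0)) \<and>
     (\<forall>y\<in>FS. (\<forall>x\<in>FS. p x y = 0) \<longrightarrow> y = (\<lambda>i. 0))"

definition opzero :: op where
  "opzero = (\<lambda>x i. 0)"

text \<open>The operator on V given by the tensor sum_k v_k (x) w_k:  x |-> sum_k <x,w_k> v_k.\<close>
definition tensor_op :: "(vec \<Rightarrow> vec \<Rightarrow> complex) \<Rightarrow> (vec \<times> vec) list \<Rightarrow> op" where
  "tensor_op p ps = (\<lambda>x. if x \<in> FS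
       then (\<lambda>i. \<Sum>k<length ps. p x (snd (ps ! k)) * fst (ps ! k) i)
       else (\<lambda>i. 0))"

text \<open>gl(V,V_*) = V (x) V_*, realised (faithfully) as operators on V.\<close>
definition glV :: "(vec \<Rightarrow> vec \<Rightarrow> complex) \<Rightarrow> op set" where
  "glV p = {T. \<exists>ps. set ps \<subseteq> FS \<times> FS \<and> T = tensor_op p ps}"

definition opbr :: "op \<Rightarrow> op \<Rightarrow> op" where
  "opbr S T = (\<lambda>x i. S (T x) i - T (S x) i)"

text \<open>sl(V,V_*) = [gl(V,V_*), gl(V,V_*)] (linear span of brackets).\<close>
definition slV :: "(vec \<Rightarrow> vec \<Rightarrow> complex) \<Rightarrow> op set" where
  "slV p = {T. \<exists>abs. set abs \<subseteq> glV p \<times> glV p \<and>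
      T = (\<lambda>x i. \<Sum>k<length abs. opbr (fst (abs ! k)) (snd (abs ! k)) x i)}"

text \<open>so(V): span of v (x) w - w (x) v;  sp(V): span of v (x) w + w (x) v
  (here V_* = V with the form b).\<close>
definition soV :: "(vec \<Rightarrow> vec \<Rightarrow> complex) \<Rightarrow> op set" where
  "soV b = {T. \<exists>ps. set ps \<subseteq> FS \<times> FS \<and>
      T = (\<lambda>x. if x \<in> FS
       then (\<lambda>i. \<Sum>k<length ps. b x (snd (ps ! k)) * fst (ps ! k) i
                                 - b x (fst (ps ! k)) * snd (ps ! k) i)
       else (\<lambda>i. 0))}"

definition spV :: "(vec \<Rightarrow> vec \<Rightarrow> complex) \<Rightarrow> op set" where
  "spV b = {T. \<exists>ps. set ps \<subseteq> FS \<times> FS \<and>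
      T = (\<lambda>x. if x \<in> FS
       then (\<lambda>i. \<Sum>k<length ps. b x (snd (ps ! k)) * fst (ps ! k) i
                                 + b x (fst (ps ! k)) * snd (ps ! k) i)
       else (\<lambda>i. 0))}"

text \<open>gl(W,W_*) with W = V^n, W_* = V_*^n: n x n block matrices with entries in gl(V,V_*)
  (indices 0..n-1; entries outside are zero).\<close>
definition glW :: "nat \<Rightarrow> (vec \<Rightarrow> vec \<Rightarrow> complex) \<Rightarrow> bmat set" where
  "glW n p = {X. (\<forall>i j. i < n \<and> j < n \<longrightarrow> X i j \<in> glV p) \<and>
                 (\<forall>i j. \<not> (i < n \<and> j < n) \<longrightarrow> X i j = opzero)}"

definition bbr :: "nat \<Rightarrow> bmat \<Rightarrow> bmat \<Rightarrow> bmat" where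
  "bbr n X Y = (\<lambda>i j x k. \<Sum>l<n. X i l (Y l j x) k - Y i l (X l j x) k)"

definition diagmap :: "nat \<Rightarrow> op \<Rightarrow> bmat" where
  "diagmap n A = (\<lambda>i j. if i = j \<and> i < n then A else opzero)"

definition normalizer :: "nat \<Rightarrow> (vec \<Rightarrow> vec \<Rightarrow> complex) \<Rightarrow> bmat set \<Rightarrow> bmat set" where
  "normalizer n p S = {X \<in> glW n p. \<forall>Y\<in>S. bbr n X Y \<in> S}"

end

theory Submission
  imports Defs
begin

text \<open>Operators of gl(V,V_*) are finite-rank operators x |-> sum <x,w_k> v_k on the space FS of
  finitely supported sequences; all their values are supported in one initial segment of
  coordinates.  The argument rests on "probes": for a subalgebra L, elements B of L whose
  m-th output coordinate, for every large m, is the functional y |-> <y,w>.  Bracketing a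
  finite-rank T with such a probe and reading off coordinate m gives -<T x, w>, so by
  nondegeneracy T is determined by its brackets with L (probes_separate).

  Consequently, if [X, diag(B,...,B)] is block-diagonal for all B in L, the off-diagonal
  blocks of X vanish and its diagonal blocks agree, which reduces the normalizer of diag(L)
  in gl(W,W_*) to the normalizer of L in gl(V,V_*) (normalizer_diagmap).  For L = sl(V,V_*)
  the latter is all of gl(V,V_*).  For L = so(V), sp(V), viewed uniformly as the skew
  operators of an e-symmetric form (e = 1 or -1), an operator A normalizing L has a
  symmetrization A + A^* commuting with all probes, hence A^* = -A and A is in L.\<close>

abbreviation zv :: vec where "zv \<equiv> (\<lambda>i. 0)"

definition unit_vec :: "nat \<Rightarrow> vec" where
  "unit_vec m = (\<lambda>i. if i = m then 1 else 0)"

lemma FS_zero [simp]: "zv \<in> FS"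
  by (simp add: FS_def)

lemma FS_unit_vec [simp]: "unit_vec m \<in> FS"
  by (simp add: FS_def unit_vec_def)

lemma FS_lin:
  assumes "x \<in> FS" "y \<in> FS"
  shows "(\<lambda>i. a * x i + y i) \<in> FS"
proof -
  have "{i. a * x i + y i \<noteq> 0} \<subseteq> {i. x i \<noteq> 0} \<union> {i. y i \<noteq> 0}" by auto
  thus ?thesis using assms unfolding FS_def by (auto intro: finite_subset)
qed

lemma FS_add: "x \<in> FS \<Longrightarrow> y \<in> FS \<Longrightarrow> (\<lambda>i. x i + y i) \<in> FS"
  using FS_lin[of x y 1] by simp

lemma FS_scale: "x \<in> FS \<Longrightarrow> (\<lambda>i. a * x i) \<in> FS"
  using FS_lin[of x zv a] by simp

lemma FS_diff: "x \<in> FS \<Longrightarrow> y \<in> FS \<Longrightarrow> (\<lambda>i. x i - y i) \<in> FS"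
  using FS_lin[of y x "-1"] by simp

lemma FS_bound: "x \<in> FS \<Longrightarrow> \<exists>N. \<forall>i\<ge>N. x i = 0"
proof -
  assume "x \<in> FS"
  then obtain N where "\<forall>i\<in>{i. x i \<noteq> 0}. i < N"
    unfolding FS_def finite_nat_set_iff_bounded by blast
  thus ?thesis by (metis leD mem_Collect_eq)
qed

lemma FS_list_bound: "set vs \<subseteq> FS \<Longrightarrow> \<exists>N. \<forall>v\<in>set vs. \<forall>i\<ge>N. v i = 0"
proof (induction vs)
  case (Cons v vs)
  then obtain N where N: "\<forall>v\<in>set vs. \<forall>i\<ge>N. v i = 0" by auto
  obtain M where M: "\<forall>i\<ge>M. v i = 0" using FS_bound[of v] Cons.prems by auto
  show ?case by (rule exI[of _ "max N M"]) (use N M in auto)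
qed simp

locale pairing =
  fixes p :: "vec \<Rightarrow> vec \<Rightarrow> complex"
  assumes bilinear: "bilinear_pairing p"
begin

lemma linear_left: "x \<in> FS \<Longrightarrow> y \<in> FS \<Longrightarrow> z \<in> FS \<Longrightarrow> p (\<lambda>i. a * x i + y i) z = a * p x z + p y z"
  using bilinear unfolding bilinear_pairing_def by blast

lemma linear_right: "x \<in> FS \<Longrightarrow> y \<in> FS \<Longrightarrow> z \<in> FS \<Longrightarrow> p z (\<lambda>i. a * x i + y i) = a * p z x + p z y"
  using bilinear unfolding bilinear_pairing_def by blast

lemma zero_left [simp]: "z \<in> FS \<Longrightarrow> p zv z = 0"
  using linear_left[of zv zv z 1] by simp

lemma zero_right [simp]: "z \<in> FS \<Longrightarrow> p z zv = 0"
  using linear_right[of zv zv z 1] by simp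

lemma scale_left: "x \<in> FS \<Longrightarrow> z \<in> FS \<Longrightarrow> p (\<lambda>i. a * x i) z = a * p x z"
  using linear_left[of x zv z a] by simp

lemma scale_right: "x \<in> FS \<Longrightarrow> z \<in> FS \<Longrightarrow> p z (\<lambda>i. a * x i) = a * p z x"
  using linear_right[of x zv z a] by simp

lemma add_left: "x \<in> FS \<Longrightarrow> y \<in> FS \<Longrightarrow> z \<in> FS \<Longrightarrow> p (\<lambda>i. x i + y i) z = p x z + p y z"
  using linear_left[of x y z 1] by simp

lemma add_right: "x \<in> FS \<Longrightarrow> y \<in> FS \<Longrightarrow> z \<in> FS \<Longrightarrow> p z (\<lambda>i. x i + y i) = p z x + p z y"
  using linear_right[of x y z 1] by simp

lemma diff_left: "x \<in> FS \<Longrightarrow> y \<in> FS \<Longrightarrow> z \<in> FS \<Longrightarrow> p (\<lambda>i. x i - y i) z = p x z - p y z"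
  using linear_left[of y x z "-1"] by simp

lemma diff_right: "x \<in> FS \<Longrightarrow> y \<in> FS \<Longrightarrow> z \<in> FS \<Longrightarrow> p z (\<lambda>i. x i - y i) = p z x - p z y"
  using linear_right[of y x z "-1"] by simp

lemma tensor_apply:
  "x \<in> FS \<Longrightarrow> tensor_op p ps x i = (\<Sum>a\<leftarrow>ps. p x (snd a) * fst a i)"
  by (simp add: tensor_op_def sum_list_sum_nth atLeast0LessThan)

lemma tensor_outside: "x \<notin> FS \<Longrightarrow> tensor_op p ps x = zv"
  by (simp add: tensor_op_def)

lemma tensor_Nil: "tensor_op p [] x = zv"
  by (simp add: tensor_op_def)

lemma tensor_Cons:
  "x \<in> FS \<Longrightarrow> tensor_op p (a # ps) x = (\<lambda>i. p x (snd a) * fst a i + tensor_op p ps x i)"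
  by (rule ext) (simp add: tensor_apply)

lemma tensor_append: "tensor_op p (ps @ qs) x i = tensor_op p ps x i + tensor_op p qs x i"
  by (cases "x \<in> FS") (simp_all add: tensor_apply tensor_outside)

lemma tensor_scale_fst:
  "tensor_op p (map (\<lambda>a. (\<lambda>i. c * fst a i, snd a)) ps) x i = c * tensor_op p ps x i"
  by (cases "x \<in> FS") (simp_all add: tensor_apply tensor_outside o_def sum_list_const_mult
      mult.left_commute)

lemma tensor_scale_snd:
  assumes "set ps \<subseteq> FS \<times> FS"
  shows "tensor_op p (map (\<lambda>a. (fst a, \<lambda>i. c * snd a i)) ps) x i = c * tensor_op p ps x i"
proof (cases "x \<in> FS")
  case True
  thus ?thesis using assms by (induction ps) (auto simp: tensor_apply scale_right algebra_simps)
qed (simp add: tensor_outside)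

lemma tensor_FS: "set ps \<subseteq> FS \<times> FS \<Longrightarrow> tensor_op p ps x \<in> FS"
proof (cases "x \<in> FS")
  case True
  show "set ps \<subseteq> FS \<times> FS \<Longrightarrow> ?thesis"
    by (induction ps) (auto simp: tensor_Nil tensor_Cons[OF True] intro!: FS_lin)
qed (simp add: tensor_outside)

lemma tensor_bound:
  assumes "set ps \<subseteq> FS \<times> FS"
  shows "\<exists>N. \<forall>x i. N \<le> i \<longrightarrow> tensor_op p ps x i = 0"
proof -
  have "set (map fst ps) \<subseteq> FS" using assms by auto
  then obtain N where N: "\<forall>v\<in>set (map fst ps). \<forall>i\<ge>N. v i = 0"
    using FS_list_bound by blast
  have "tensor_op p ps x i = 0" if "N \<le> i" for x i
  proof (cases "x \<in> FS")
    case True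
    have "(\<Sum>a\<leftarrow>ps. p x (snd a) * fst a i) = (\<Sum>a\<leftarrow>ps. 0)"
      by (rule arg_cong[where f=sum_list], rule map_cong) (use N that in auto)
    thus ?thesis using True by (simp add: tensor_apply)
  qed (simp add: tensor_outside)
  thus ?thesis by blast
qed

lemma pair_tensor_left:
  assumes "set ps \<subseteq> FS \<times> FS" "x \<in> FS" "y \<in> FS"
  shows "p (tensor_op p ps x) y = (\<Sum>a\<leftarrow>ps. p x (snd a) * p (fst a) y)"
  using assms(1)
proof (induction ps)
  case (Cons a ps)
  thus ?case using tensor_FS[of ps x] assms(2,3) by (auto simp: tensor_Cons linear_left)
qed (simp add: tensor_Nil assms)

lemma pair_tensor_right:
  assumes "set ps \<subseteq> FS \<times> FS" "x \<in> FS" "y \<in> FS"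
  shows "p y (tensor_op p ps x) = (\<Sum>a\<leftarrow>ps. p x (snd a) * p y (fst a))"
  using assms(1)
proof (induction ps)
  case (Cons a ps)
  thus ?case using tensor_FS[of ps x] assms(2,3) by (auto simp: tensor_Cons linear_right)
qed (simp add: tensor_Nil assms)

lemma tensor_zero:
  assumes "set ps \<subseteq> FS \<times> FS"
  shows "tensor_op p ps zv = zv"
  using assms by (induction ps) (auto simp: tensor_Nil tensor_Cons)

lemma glV_FS: "T \<in> glV p \<Longrightarrow> T x \<in> FS"
  unfolding glV_def using tensor_FS by blast

lemma glV_outside: "T \<in> glV p \<Longrightarrow> x \<notin> FS \<Longrightarrow> T x = zv"
  unfolding glV_def using tensor_outside by blast

lemma glV_zero: "T \<in> glV p \<Longrightarrow> T zv = zv"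
  unfolding glV_def using tensor_zero by blast

lemma glV_bound: "T \<in> glV p \<Longrightarrow> \<exists>N. \<forall>x i. N \<le> i \<longrightarrow> T x i = 0"
  unfolding glV_def using tensor_bound by blast

lemma glV_opzero: "opzero \<in> glV p"
proof -
  have "opzero = tensor_op p []" by (rule ext) (simp add: tensor_Nil opzero_def)
  thus ?thesis unfolding glV_def by (auto intro!: exI[of _ "[]"])
qed

lemma glV_add:
  assumes "S \<in> glV p" "T \<in> glV p"
  shows "(\<lambda>x i. S x i + T x i) \<in> glV p"
proof -
  obtain ps qs where "set ps \<subseteq> FS \<times> FS" "S = tensor_op p ps"
    and "set qs \<subseteq> FS \<times> FS" "T = tensor_op p qs" using assms unfolding glV_def by blast
  moreover from this have "(\<lambda>x i. S x i + T x i) = tensor_op p (ps @ qs)"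
    by (intro ext) (simp add: tensor_append)
  ultimately show ?thesis unfolding glV_def by (auto intro!: exI[of _ "ps @ qs"])
qed

lemma glV_scale:
  assumes "S \<in> glV p"
  shows "(\<lambda>x i. c * S x i) \<in> glV p"
proof -
  obtain ps where ps: "set ps \<subseteq> FS \<times> FS" "S = tensor_op p ps" using assms unfolding glV_def by blast
  let ?qs = "map (\<lambda>a. (\<lambda>i. c * fst a i, snd a)) ps"
  have "set ?qs \<subseteq> FS \<times> FS" using ps(1) FS_scale by auto
  moreover have "(\<lambda>x i. c * S x i) = tensor_op p ?qs" by (intro ext) (simp add: ps(2) tensor_scale_fst)
  ultimately show ?thesis unfolding glV_def by blast
qed

lemma glV_diff: "S \<in> glV p \<Longrightarrow> T \<in> glV p \<Longrightarrow> (\<lambda>x i. S x i - T x i) \<in> glV p"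
  using glV_add[OF _ glV_scale[of T "-1"], of S] by simp

text \<open>Composition of finite-rank operators: with S = sum (v (x) w) and T = sum (v' (x) w'),
  S o T = sum <v',w> v (x) w'.\<close>

lemma glV_comp:
  assumes "S \<in> glV p" "T \<in> glV p"
  shows "(\<lambda>x. S (T x)) \<in> glV p"
proof -
  obtain ps qs where ps: "set ps \<subseteq> FS \<times> FS" "S = tensor_op p ps"
    and qs: "set qs \<subseteq> FS \<times> FS" "T = tensor_op p qs" using assms unfolding glV_def by blast
  define rs where "rs = concat (map (\<lambda>a. map (\<lambda>b. (\<lambda>i. p (fst b) (snd a) * fst a i, snd b)) qs) ps)"
  have "set rs \<subseteq> FS \<times> FS" using ps(1) qs(1) FS_scale by (fastforce simp: rs_def)
  moreover have "(\<lambda>x. S (T x)) = tensor_op p rs"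
  proof (intro ext)
    fix x i
    show "S (T x) i = tensor_op p rs x i"
    proof (cases "x \<in> FS")
      case x: True
      have "S (T x) i = (\<Sum>a\<leftarrow>ps. p (T x) (snd a) * fst a i)"
        using ps qs x tensor_FS by (simp add: tensor_apply)
      also have "\<dots> = (\<Sum>a\<leftarrow>ps. (\<Sum>b\<leftarrow>qs. p x (snd b) * p (fst b) (snd a)) * fst a i)"
        using ps(1) qs x by (intro arg_cong[where f=sum_list] map_cong) (auto simp: pair_tensor_left)
      also have "\<dots> = tensor_op p rs x i"
        unfolding rs_def tensor_apply[OF x]
        by (induction ps) (simp_all add: sum_list_mult_const[symmetric] o_def mult.assoc)
      finally show ?thesis .
    qed (use ps(1) in \<open>simp add: ps(2) qs(2) tensor_outside tensor_zero\<close>)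
  qed
  ultimately show ?thesis unfolding glV_def by blast
qed

lemma glV_opbr: "S \<in> glV p \<Longrightarrow> T \<in> glV p \<Longrightarrow> opbr S T \<in> glV p"
  unfolding opbr_def using glV_diff[OF glV_comp glV_comp] by blast

lemma slV_glV: "T \<in> slV p \<Longrightarrow> T \<in> glV p"
proof -
  assume "T \<in> slV p"
  then obtain abs where abs: "set abs \<subseteq> glV p \<times> glV p"
    and T: "T = (\<lambda>x i. \<Sum>k<length abs. opbr (fst (abs ! k)) (snd (abs ! k)) x i)"
    unfolding slV_def by blast
  have "(\<lambda>x i. \<Sum>a\<leftarrow>abs. opbr (fst a) (snd a) x i) \<in> glV p" using abs
  proof (induction abs)
    case Nil thus ?case using glV_opzero by (simp add: opzero_def)
  next
    case (Cons a abs) thus ?case using glV_add[OF glV_opbr] by auto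
  qed
  thus ?thesis by (simp add: T sum_list_sum_nth atLeast0LessThan)
qed

lemma opbr_slV: "S \<in> glV p \<Longrightarrow> T \<in> glV p \<Longrightarrow> opbr S T \<in> slV p"
  unfolding slV_def by (rule CollectI, rule exI[of _ "[(S, T)]"]) (simp add: opbr_def)

lemma glW_zero: "X \<in> glW n p \<Longrightarrow> X i j zv = zv"
  unfolding glW_def using glV_zero by (cases "i < n \<and> j < n") (auto simp: opzero_def)

lemma diag_glW: "A \<in> glV p \<Longrightarrow> diagmap n A \<in> glW n p"
  unfolding glW_def diagmap_def using glV_opzero by auto

lemma rank_one_apply: "y \<in> FS \<Longrightarrow> tensor_op p [(v, w)] y = (\<lambda>i. p y w * v i)"
  by (rule ext) (simp add: tensor_apply)

lemma rank_one_glV: "v \<in> FS \<Longrightarrow> w \<in> FS \<Longrightarrow> tensor_op p [(v, w)] \<in> glV p"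
  unfolding glV_def by (auto intro!: exI[of _ "[(v, w)]"])

end

lemma diagmap_inj: "0 < n \<Longrightarrow> diagmap n A = diagmap n B \<Longrightarrow> A = B"
  unfolding diagmap_def by (drule fun_cong[of _ _ 0], drule fun_cong[of _ _ 0]) simp

lemma diagmap_of_blocks:
  assumes X: "\<And>i j. \<not> (i < n \<and> j < n) \<Longrightarrow> X i j = opzero"
    and off_diag: "\<And>i j. i < n \<Longrightarrow> j < n \<Longrightarrow> i \<noteq> j \<Longrightarrow> X i j = opzero"
    and on_diag: "\<And>i. i < n \<Longrightarrow> X i i = X 0 0"
  shows "X = diagmap n (X 0 0)"
proof (rule ext, rule ext)
  fix i j
  show "X i j = diagmap n (X 0 0) i j"
  proof (cases "i < n \<and> j < n")
    case ij: True
    show ?thesis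
    proof (cases "i = j")
      case True
      hence "X i j = X 0 0" using on_diag ij by blast
      thus ?thesis using True ij by (simp add: diagmap_def)
    qed (simp add: off_diag ij diagmap_def)
  next
    case False
    thus ?thesis using X[OF False] by (auto simp: diagmap_def)
  qed
qed

lemma bbr_diagmap_entry:
  assumes "\<And>i l. X i l zv = zv" "B zv = zv" "i < n" "j < n"
  shows "bbr n X (diagmap n B) i j = opbr (X i j) B"
proof (intro ext)
  fix x k
  have "bbr n X (diagmap n B) i j x k
      = (\<Sum>l<n. (if l = j then X i j (B x) k else 0) - (if l = i then B (X i j x) k else 0))"
    unfolding bbr_def
    by (rule sum.cong[OF refl]) (use assms in \<open>auto simp: diagmap_def opzero_def\<close>)
  also have "\<dots> = opbr (X i j) B x k"
    using assms by (simp add: sum_subtractf opbr_def)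
  finally show "bbr n X (diagmap n B) i j x k = opbr (X i j) B x k" .
qed

lemma bbr_diagmap:
  assumes "A zv = zv" "B zv = zv"
  shows "bbr n (diagmap n A) (diagmap n B) = diagmap n (opbr A B)"
proof (intro ext)
  fix i j x k
  have "bbr n (diagmap n A) (diagmap n B) i j x k
      = (\<Sum>l<n. if l = i then diagmap n (opbr A B) i j x k else 0)"
    unfolding bbr_def
    by (rule sum.cong[OF refl]) (use assms in \<open>auto simp: diagmap_def opzero_def opbr_def\<close>)
  also have "\<dots> = diagmap n (opbr A B) i j x k"
    by (simp add: diagmap_def opzero_def)
  finally show "bbr n (diagmap n A) (diagmap n B) i j x k = diagmap n (opbr A B) i j x k" .
qed

text \<open>Since finite-rank
  operators have bounded output support, commutators with probes detect <T x, w>.\<close>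

definition probes :: "(vec \<Rightarrow> vec \<Rightarrow> complex) \<Rightarrow> op set \<Rightarrow> bool" where
  "probes p L \<longleftrightarrow> (\<forall>w\<in>FS. \<exists>M. \<forall>m\<ge>M. \<exists>B\<in>L. \<forall>y\<in>FS. B y m = p y w)"

locale nondeg_pairing = pairing +
  assumes nondeg: "nondegenerate p"
begin

lemma nondeg_left: "x \<in> FS \<Longrightarrow> (\<And>y. y \<in> FS \<Longrightarrow> p x y = 0) \<Longrightarrow> x = zv"
  using nondeg unfolding nondegenerate_def by blast

lemma nondeg_right: "y \<in> FS \<Longrightarrow> (\<And>x. x \<in> FS \<Longrightarrow> p x y = 0) \<Longrightarrow> y = zv"
  using nondeg unfolding nondegenerate_def by blast

lemma probes_separate:
  assumes L: "probes p L" and T: "T \<in> glV p" and U: "U \<in> glV p"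
    and same: "\<And>B x. B \<in> L \<Longrightarrow> x \<in> FS \<Longrightarrow> opbr T B x = opbr U B x"
  shows "T = U"
proof (rule ext)
  fix x
  show "T x = U x"
  proof (cases "x \<in> FS")
    case x: True
    obtain NT where NT: "\<forall>x i. NT \<le> i \<longrightarrow> T x i = 0" using glV_bound[OF T] by blast
    obtain NU where NU: "\<forall>x i. NU \<le> i \<longrightarrow> U x i = 0" using glV_bound[OF U] by blast
    have "p (T x) w = p (U x) w" if w: "w \<in> FS" for w
    proof -
      obtain M where M: "\<forall>m\<ge>M. \<exists>B\<in>L. \<forall>y\<in>FS. B y m = p y w"
        using L w unfolding probes_def by blast
      hence "\<exists>B\<in>L. \<forall>y\<in>FS. B y (max M (max NT NU)) = p y w" by simp
      then obtain B where B: "B \<in> L" "\<forall>y\<in>FS. B y (max M (max NT NU)) = p y w"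
        by blast
      have "opbr T B x (max M (max NT NU)) = opbr U B x (max M (max NT NU))"
        using same[OF B(1) x] by simp
      thus ?thesis using B(2) NT NU glV_FS[OF T] glV_FS[OF U] by (simp add: opbr_def)
    qed
    hence diff_zero: "(\<lambda>i. T x i - U x i) = zv"
      using glV_FS[OF T] glV_FS[OF U] by (intro nondeg_left) (simp_all add: FS_diff diff_left)
    show ?thesis
    proof (rule ext)
      fix i show "T x i = U x i" using fun_cong[OF diff_zero, of i] by simp
    qed
  qed (simp add: glV_outside T U)
qed

text \<open>If the brackets of a block matrix X with all diag(B, ..., B), B in L, are again
  block-diagonal, then X itself is of the form diag(A, ..., A): the off-diagonal blocks and
  the differences of diagonal blocks have zero commutator with every B in L.\<close>

lemma bracket_diagonal_imp_diagonal:
  assumes n: "0 < n" and L: "L \<subseteq> glV p" "probes p L" and X: "X \<in> glW n p"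
    and diag: "\<And>B. B \<in> L \<Longrightarrow> bbr n X (diagmap n B) \<in> range (diagmap n)"
  shows "X = diagmap n (X 0 0)"
proof -
  have blocks: "X i j \<in> glV p" if "i < n" "j < n" for i j
    using X that unfolding glW_def by blast
  have entry: "bbr n X (diagmap n B) i j = opbr (X i j) B" if "B \<in> L" "i < n" "j < n" for B i j
    using that L(1) glW_zero[OF X] glV_zero by (intro bbr_diagmap_entry) auto
  have outside: "X i j = opzero" if "\<not> (i < n \<and> j < n)" for i j
    using X that unfolding glW_def by blast
  have off_diag: "X i j = opzero" if "i < n" "j < n" "i \<noteq> j" for i j
  proof (rule probes_separate[OF L(2) blocks[OF that(1,2)] glV_opzero])
    fix B x assume B: "B \<in> L"
    then obtain C where "bbr n X (diagmap n B) = diagmap n C" using diag by blast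
    hence "opbr (X i j) B = opzero" using entry[OF B that(1,2)] that(3)
      by (simp add: diagmap_def)
    thus "opbr (X i j) B x = opbr opzero B x"
      using B L(1) glV_zero by (auto simp: opbr_def opzero_def)
  qed
  have on_diag: "X i i = X 0 0" if "i < n" for i
  proof (rule probes_separate[OF L(2) blocks[OF that that] blocks[OF n n]])
    fix B x assume B: "B \<in> L"
    then obtain C where "bbr n X (diagmap n B) = diagmap n C" using diag by blast
    thus "opbr (X i i) B x = opbr (X 0 0) B x"
      using entry[OF B that that] entry[OF B n n] that n by (simp add: diagmap_def)
  qed
  show ?thesis using outside off_diag on_diag by (rule diagmap_of_blocks)
qed

lemma normalizer_diagmap:
  assumes n: "0 < n" and L: "L \<subseteq> glV p" "probes p L"
  shows "normalizer n p (diagmap n ` L) = diagmap n ` {A \<in> glV p. \<forall>B\<in>L. opbr A B \<in> L}"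
proof (intro equalityI subsetI)
  fix X assume X: "X \<in> normalizer n p (diagmap n ` L)"
  hence glW: "X \<in> glW n p" and brackets: "\<And>B. B \<in> L \<Longrightarrow> bbr n X (diagmap n B) \<in> diagmap n ` L"
    unfolding normalizer_def by auto
  have X_diag: "X = diagmap n (X 0 0)"
    using bracket_diagonal_imp_diagonal[OF n L glW] brackets by blast
  have A: "X 0 0 \<in> glV p" using glW n unfolding glW_def by blast
  have "opbr (X 0 0) B \<in> L" if B: "B \<in> L" for B
  proof -
    obtain C where C: "C \<in> L" "bbr n X (diagmap n B) = diagmap n C" using brackets[OF B] by blast
    have "bbr n X (diagmap n B) = bbr n (diagmap n (X 0 0)) (diagmap n B)"
      using X_diag by (rule arg_cong[where f="\<lambda>Y. bbr n Y (diagmap n B)"])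
    also have "\<dots> = diagmap n (opbr (X 0 0) B)"
      using A B L(1) by (intro bbr_diagmap) (auto intro: glV_zero)
    finally have "bbr n X (diagmap n B) = diagmap n (opbr (X 0 0) B)" .
    thus ?thesis using C diagmap_inj[OF n] by metis
  qed
  thus "X \<in> diagmap n ` {A \<in> glV p. \<forall>B\<in>L. opbr A B \<in> L}" using X_diag A by blast
next
  fix X assume "X \<in> diagmap n ` {A \<in> glV p. \<forall>B\<in>L. opbr A B \<in> L}"
  then obtain A where A: "A \<in> glV p" "\<forall>B\<in>L. opbr A B \<in> L" and X: "X = diagmap n A" by blast
  have "bbr n X (diagmap n B) = diagmap n (opbr A B)" if "B \<in> L" for B
    using A(1) L(1) that unfolding X by (intro bbr_diagmap) (auto intro: glV_zero)
  thus "X \<in> normalizer n p (diagmap n ` L)"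
    unfolding normalizer_def using diag_glW[OF A(1)] A(2) X by auto
qed

lemma exists_dual_pair: "\<exists>u w. u \<in> FS \<and> w \<in> FS \<and> p u w = 1"
proof -
  have "unit_vec 0 \<noteq> zv" by (metis unit_vec_def zero_neq_one)
  then obtain x where x: "x \<in> FS" "p x (unit_vec 0) \<noteq> 0"
    using nondeg_right[of "unit_vec 0"] by auto
  have "p (\<lambda>i. (1 / p x (unit_vec 0)) * x i) (unit_vec 0) = 1"
    using x scale_left[OF x(1) FS_unit_vec, of "1 / p x (unit_vec 0)" 0] by simp
  thus ?thesis using FS_scale[OF x(1)] FS_unit_vec by blast
qed

text \<open>Probes in sl(V,V_*): for <u,w0> = 1 and m beyond the support of u, the bracket
  [e_m (x) w0, u (x) w] maps y to <y,w> e_m + (multiple of u), whose m-th coordinate is <y,w>.\<close>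

lemma slV_probes: "probes p (slV p)"
  unfolding probes_def
proof
  fix w assume w: "w \<in> FS"
  obtain u w0 where u: "u \<in> FS" "w0 \<in> FS" "p u w0 = 1" using exists_dual_pair by blast
  obtain M where M: "\<forall>i\<ge>M. u i = 0" using FS_bound[OF u(1)] by blast
  have "\<exists>B\<in>slV p. \<forall>y\<in>FS. B y m = p y w" if m: "m \<ge> M" for m
  proof
    let ?B = "opbr (tensor_op p [(unit_vec m, w0)]) (tensor_op p [(u, w)])"
    show "?B \<in> slV p" using u w by (intro opbr_slV rank_one_glV) simp_all
    show "\<forall>y\<in>FS. ?B y m = p y w"
      using u w M m FS_scale[OF u(1)] FS_scale[OF FS_unit_vec]
      by (simp add: opbr_def rank_one_apply scale_left unit_vec_def)
  qed
  thus "\<exists>M. \<forall>m\<ge>M. \<exists>B\<in>slV p. \<forall>y\<in>FS. B y m = p y w" by blast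
qed

text \<open>First assertion: the normalizer of diag(sl(V,V_*)) is diag(gl(V,V_*)), because
  sl(V,V_*) is an ideal of gl(V,V_*).\<close>

lemma normalizer_diag_slV:
  assumes "0 < n"
  shows "normalizer n p (diagmap n ` slV p) = diagmap n ` glV p"
proof -
  have "{A \<in> glV p. \<forall>B\<in>slV p. opbr A B \<in> slV p} = glV p"
    using opbr_slV slV_glV by blast
  thus ?thesis using normalizer_diagmap[OF assms _ slV_probes] slV_glV by auto
qed

end

text \<open>For an e-symmetric form (e = 1: orthogonal case, e = -1: symplectic case) the
  Lie algebras so(V), sp(V) are spanned by v (x) w - e w (x) v.\<close>

definition skew_pairs :: "complex \<Rightarrow> (vec \<times> vec) list \<Rightarrow> (vec \<times> vec) list" where
  "skew_pairs e ps = concat (map (\<lambda>a. [a, (\<lambda>i. - e * snd a i, fst a)]) ps)"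

definition skewV :: "complex \<Rightarrow> (vec \<Rightarrow> vec \<Rightarrow> complex) \<Rightarrow> op set" where
  "skewV e p = {T. \<exists>ps. set ps \<subseteq> FS \<times> FS \<and> T = tensor_op p (skew_pairs e ps)}"

text \<open>The pairs of the adjoint operator: the adjoint of v (x) w is e w (x) v.\<close>

definition adjoint_pairs :: "complex \<Rightarrow> (vec \<times> vec) list \<Rightarrow> (vec \<times> vec) list" where
  "adjoint_pairs e ps = map (\<lambda>a. (\<lambda>i. e * snd a i, fst a)) ps"

definition skew :: "(vec \<Rightarrow> vec \<Rightarrow> complex) \<Rightarrow> op \<Rightarrow> bool" where
  "skew p T \<longleftrightarrow> (\<forall>x\<in>FS. \<forall>y\<in>FS. p (T x) y = - p x (T y))"

lemma skew_pairs_Nil [simp]: "skew_pairs e [] = []"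
  and skew_pairs_Cons [simp]: "skew_pairs e (a # ps) = a # (\<lambda>i. - e * snd a i, fst a) # skew_pairs e ps"
  by (simp_all add: skew_pairs_def)

lemma skew_pairs_FS: "set ps \<subseteq> FS \<times> FS \<Longrightarrow> set (skew_pairs e ps) \<subseteq> FS \<times> FS"
  by (induction ps) (auto intro!: FS_scale[where a="-e", simplified])

lemma adjoint_pairs_FS: "set ps \<subseteq> FS \<times> FS \<Longrightarrow> set (adjoint_pairs e ps) \<subseteq> FS \<times> FS"
  by (induction ps) (auto simp: adjoint_pairs_def intro!: FS_scale)

context pairing
begin

lemma tensor_skew_pairs:
  "x \<in> FS \<Longrightarrow> tensor_op p (skew_pairs e ps) x i
     = (\<Sum>a\<leftarrow>ps. p x (snd a) * fst a i - e * p x (fst a) * snd a i)"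
  by (induction ps) (simp_all add: tensor_apply algebra_simps)

lemma tensor_skew_pairs_diff:
  "tensor_op p (skew_pairs e ps) x i = tensor_op p ps x i - tensor_op p (adjoint_pairs e ps) x i"
proof (cases "x \<in> FS")
  case True
  thus ?thesis by (induction ps) (simp_all add: tensor_apply adjoint_pairs_def algebra_simps)
qed (simp add: tensor_outside)

lemma skewV_eq_span:
  "skewV e p = {T. \<exists>ps. set ps \<subseteq> FS \<times> FS \<and>
      T = (\<lambda>x. if x \<in> FS
       then (\<lambda>i. \<Sum>k<length ps. p x (snd (ps ! k)) * fst (ps ! k) i
                                 - e * p x (fst (ps ! k)) * snd (ps ! k) i)
       else (\<lambda>i. 0))}"
proof -
  have "tensor_op p (skew_pairs e ps) = (\<lambda>x. if x \<in> FS
       then (\<lambda>i. \<Sum>k<length ps. p x (snd (ps ! k)) * fst (ps ! k) i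
                                 - e * p x (fst (ps ! k)) * snd (ps ! k) i)
       else (\<lambda>i. 0))" for ps
    by (intro ext) (simp add: tensor_skew_pairs tensor_outside sum_list_sum_nth atLeast0LessThan)
  thus ?thesis unfolding skewV_def by simp
qed

lemma soV_eq_skewV: "soV p = skewV 1 p"
  unfolding skewV_eq_span soV_def by (simp only: mult_1)

lemma spV_eq_skewV: "spV p = skewV (-1) p"
  unfolding skewV_eq_span spV_def by (simp only: mult_minus_left mult_1 diff_minus_eq_add)

lemma skew_opbr:
  assumes A: "A \<in> glV p" "skew p A" and B: "B \<in> glV p" "skew p B"
  shows "skew p (opbr A B)"
  unfolding skew_def
proof (intro ballI)
  fix x y assume x: "x \<in> FS" and y: "y \<in> FS"
  have F: "A z \<in> FS" "B z \<in> FS" for z using A(1) B(1) glV_FS by blast+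
  have sA: "p (A u) v = - p u (A v)" and sB: "p (B u) v = - p u (B v)" if "u \<in> FS" "v \<in> FS" for u v
    using A(2) B(2) that unfolding skew_def by blast+
  have "p (opbr A B x) y = p (A (B x)) y - p (B (A x)) y"
    unfolding opbr_def using diff_left F y by blast
  also have "\<dots> = - p (B x) (A y) + p (A x) (B y)" using sA[OF F(2) y] sB[OF F(1) y] by simp
  also have "\<dots> = p x (B (A y)) - p x (A (B y))" using sB[OF x F(1)] sA[OF x F(2)] by simp
  also have "\<dots> = - p x (opbr A B y)"
    unfolding opbr_def using diff_right F x by simp
  finally show "p (opbr A B x) y = - p x (opbr A B y)" .
qed

end

locale eps_pairing = nondeg_pairing +
  fixes e :: complex
  assumes eps_symmetric: "x \<in> FS \<Longrightarrow> y \<in> FS \<Longrightarrow> p x y = e * p y x"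
    and eps_square: "e * e = 1"
begin

lemma adjoint_left:
  assumes ps: "set ps \<subseteq> FS \<times> FS" and x: "x \<in> FS" and y: "y \<in> FS"
  shows "p (tensor_op p ps x) y = p x (tensor_op p (adjoint_pairs e ps) y)"
proof -
  have "p (tensor_op p ps x) y = (\<Sum>a\<leftarrow>ps. p x (snd a) * p (fst a) y)"
    using ps x y by (rule pair_tensor_left)
  also have "\<dots> = (\<Sum>a\<leftarrow>ps. p y (fst a) * p x (\<lambda>i. e * snd a i))"
  proof (intro arg_cong[where f=sum_list] map_cong refl)
    fix a assume "a \<in> set ps"
    hence a: "fst a \<in> FS" "snd a \<in> FS" using ps by auto
    show "p x (snd a) * p (fst a) y = p y (fst a) * p x (\<lambda>i. e * snd a i)"
      using eps_symmetric[OF a(1) y] scale_right[OF a(2) x] by simp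
  qed
  also have "\<dots> = p x (tensor_op p (adjoint_pairs e ps) y)"
    using adjoint_pairs_FS[OF ps] x y by (simp add: pair_tensor_right adjoint_pairs_def o_def)
  finally show ?thesis .
qed

lemma adjoint_right:
  assumes ps: "set ps \<subseteq> FS \<times> FS" and x: "x \<in> FS" and y: "y \<in> FS"
  shows "p (tensor_op p (adjoint_pairs e ps) x) y = p x (tensor_op p ps y)"
proof -
  have F: "tensor_op p (adjoint_pairs e ps) x \<in> FS" "tensor_op p ps y \<in> FS"
    using tensor_FS adjoint_pairs_FS ps by blast+
  have "p (tensor_op p (adjoint_pairs e ps) x) y = e * p (tensor_op p ps y) x"
    using eps_symmetric[OF F(1) y] adjoint_left[OF ps y x] by simp
  also have "\<dots> = e * e * p x (tensor_op p ps y)"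
    using eps_symmetric[OF F(2) x] by simp
  finally show ?thesis using eps_square by simp
qed

lemma skew_iff_adjoint_neg:
  assumes ps: "set ps \<subseteq> FS \<times> FS"
  shows "skew p (tensor_op p ps)
     \<longleftrightarrow> (\<forall>y\<in>FS. tensor_op p (adjoint_pairs e ps) y = (\<lambda>i. - tensor_op p ps y i))"
proof
  assume skew: "skew p (tensor_op p ps)"
  show "\<forall>y\<in>FS. tensor_op p (adjoint_pairs e ps) y = (\<lambda>i. - tensor_op p ps y i)"
  proof
    fix y assume y: "y \<in> FS"
    have F: "tensor_op p (adjoint_pairs e ps) y \<in> FS" "tensor_op p ps y \<in> FS"
      using tensor_FS adjoint_pairs_FS ps by blast+
    have sum_zero: "(\<lambda>i. tensor_op p (adjoint_pairs e ps) y i + tensor_op p ps y i) = zv"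
    proof (rule nondeg_right)
      fix x assume x: "x \<in> FS"
      have "p x (tensor_op p (adjoint_pairs e ps) y) = - p x (tensor_op p ps y)"
        using skew x y adjoint_left[OF ps x y] by (simp add: skew_def)
      thus "p x (\<lambda>i. tensor_op p (adjoint_pairs e ps) y i + tensor_op p ps y i) = 0"
        by (simp add: add_right[OF F x])
    qed (use F FS_add in blast)
    show "tensor_op p (adjoint_pairs e ps) y = (\<lambda>i. - tensor_op p ps y i)"
    proof
      fix i show "tensor_op p (adjoint_pairs e ps) y i = - tensor_op p ps y i"
        using fun_cong[OF sum_zero, of i] by (simp add: eq_neg_iff_add_eq_0)
    qed
  qed
next
  assume "\<forall>y\<in>FS. tensor_op p (adjoint_pairs e ps) y = (\<lambda>i. - tensor_op p ps y i)"
  hence "p (tensor_op p ps x) y = - p x (tensor_op p ps y)" if "x \<in> FS" "y \<in> FS" for x y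
    using adjoint_left[OF ps that] scale_right[OF tensor_FS[OF ps] that(1), of "-1"] that by simp
  thus "skew p (tensor_op p ps)" unfolding skew_def by blast
qed

text \<open>Elements of the span of v (x) w - e w (x) v are skew: such an operator is the
  difference of an operator and its adjoint.\<close>

lemma skewV_skew:
  assumes "T \<in> skewV e p"
  shows "T \<in> glV p \<and> skew p T"
proof -
  obtain ps where ps: "set ps \<subseteq> FS \<times> FS" and T: "T = tensor_op p (skew_pairs e ps)"
    using assms unfolding skewV_def by blast
  have "p (T x) y = - p x (T y)" if x: "x \<in> FS" and y: "y \<in> FS" for x y
  proof -
    let ?A = "tensor_op p ps" and ?A' = "tensor_op p (adjoint_pairs e ps)"
    have F: "?A z \<in> FS" "?A' z \<in> FS" for z using tensor_FS adjoint_pairs_FS ps by blast+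
    have T_diff: "T z = (\<lambda>i. ?A z i - ?A' z i)" for z
      unfolding T by (rule ext) (rule tensor_skew_pairs_diff)
    have "p (T x) y = p x (?A' y) - p x (?A y)"
      using adjoint_left[OF ps x y] adjoint_right[OF ps x y] by (simp add: T_diff diff_left F y)
    also have "\<dots> = - p x (T y)" by (simp add: T_diff diff_right F x)
    finally show ?thesis .
  qed
  moreover have "T \<in> glV p" using skew_pairs_FS[OF ps] unfolding T glV_def by blast
  ultimately show ?thesis unfolding skew_def by blast
qed

text \<open>Conversely, a skew operator A is half the difference of A and its adjoint -A, hence
  lies in the span of v (x) w - e w (x) v.\<close>

lemma skew_in_skewV:
  assumes "A \<in> glV p" "skew p A"
  shows "A \<in> skewV e p"
proof -
  obtain ps where ps: "set ps \<subseteq> FS \<times> FS" and A: "A = tensor_op p ps"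
    using assms(1) unfolding glV_def by blast
  have adj: "tensor_op p (adjoint_pairs e ps) y = (\<lambda>i. - A y i)" if "y \<in> FS" for y
    using skew_iff_adjoint_neg[OF ps] assms(2) that unfolding A by blast
  define qs where "qs = map (\<lambda>a. (\<lambda>i. (1/2) * fst a i, snd a)) ps"
  have qs_FS: "set qs \<subseteq> FS \<times> FS"
    using ps by (auto simp: qs_def intro!: FS_scale[where a="1/2", simplified])
  have adj_qs: "adjoint_pairs e qs = map (\<lambda>a. (fst a, \<lambda>i. (1/2) * snd a i)) (adjoint_pairs e ps)"
    by (simp add: qs_def adjoint_pairs_def)
  have "A = tensor_op p (skew_pairs e qs)"
  proof (intro ext)
    fix x i
    show "A x i = tensor_op p (skew_pairs e qs) x i"
    proof (cases "x \<in> FS")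
      case x: True
      have half: "tensor_op p qs x i = A x i / 2"
        using tensor_scale_fst[of "1/2" ps x i] by (simp add: qs_def A)
      have "tensor_op p (adjoint_pairs e qs) x i = (1/2) * tensor_op p (adjoint_pairs e ps) x i"
        unfolding adj_qs using adjoint_pairs_FS[OF ps] by (rule tensor_scale_snd)
      hence adj_half: "tensor_op p (adjoint_pairs e qs) x i = - A x i / 2"
        using adj[OF x] by simp
      show ?thesis by (simp add: tensor_skew_pairs_diff half adj_half)
    qed (simp add: A tensor_outside)
  qed
  thus ?thesis unfolding skewV_def using qs_FS by blast
qed

lemma skewV_eq: "skewV e p = {A \<in> glV p. skew p A}"
  using skewV_skew skew_in_skewV by blast

text \<open>Probes in the skew operators: for m beyond the support of w, the operator
  e_m (x) w - e w (x) e_m has m-th output coordinate y |-> <y,w>.\<close>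

lemma skewV_probes: "probes p (skewV e p)"
  unfolding probes_def
proof
  fix w assume w: "w \<in> FS"
  obtain M where M: "\<forall>i\<ge>M. w i = 0" using FS_bound[OF w] by blast
  have "\<exists>B\<in>skewV e p. \<forall>y\<in>FS. B y m = p y w" if m: "m \<ge> M" for m
  proof
    show "tensor_op p (skew_pairs e [(unit_vec m, w)]) \<in> skewV e p"
      unfolding skewV_def using w by (auto intro!: exI[of _ "[(unit_vec m, w)]"])
    show "\<forall>y\<in>FS. tensor_op p (skew_pairs e [(unit_vec m, w)]) y m = p y w"
      using M m by (simp add: tensor_skew_pairs unit_vec_def del: skew_pairs_Cons)
  qed
  thus "\<exists>M. \<forall>m\<ge>M. \<exists>B\<in>skewV e p. \<forall>y\<in>FS. B y m = p y w" by blast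
qed

text \<open>Key identity: if A' is the adjoint of A, B is skew and [A,B] is skew, then A + A'
  commutes with B, since <[A',B]x, y> = <x, [A,B]y> = - <[A,B]x, y>.\<close>

lemma symmetrization_commutes:
  assumes A: "A \<in> glV p" "A' \<in> glV p"
    and adj: "\<And>u v. u \<in> FS \<Longrightarrow> v \<in> FS \<Longrightarrow> p (A u) v = p u (A' v) \<and> p (A' u) v = p u (A v)"
    and B: "B \<in> glV p" "skew p B" and AB: "skew p (opbr A B)"
    and x: "x \<in> FS"
  shows "opbr (\<lambda>x i. A x i + A' x i) B x = zv"
proof (rule nondeg_left)
  have F: "A z \<in> FS" "A' z \<in> FS" "B z \<in> FS" for z using A B(1) glV_FS by blast+
  have FC: "(\<lambda>i. A z i + A' z i) \<in> FS" for z using F FS_add by blast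
  show "opbr (\<lambda>x i. A x i + A' x i) B x \<in> FS"
    unfolding opbr_def using FC F FS_diff by blast
  fix y assume y: "y \<in> FS"
  have sB: "p (B u) v = - p u (B v)" if "u \<in> FS" "v \<in> FS" for u v
    using B(2) that unfolding skew_def by blast
  have "p (opbr (\<lambda>x i. A x i + A' x i) B x) y
      = p (A (B x)) y + p (A' (B x)) y + p (A x) (B y) + p (A' x) (B y)"
    unfolding opbr_def using F FC y
    by (simp add: diff_left add_left sB[OF FC y] add_left[OF F(1,2) F(3)])
  also have "\<dots> = p (opbr A B x) y + p x (opbr A B y)"
    using conjunct2[OF adj[OF x F(3)]] conjunct2[OF adj[OF F(3) y]] sB[OF x F(1)] sB[OF F(1) y] F x y
    by (simp add: opbr_def diff_left diff_right)
  also have "\<dots> = 0" using AB x y unfolding skew_def by simp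
  finally show "p (opbr (\<lambda>x i. A x i + A' x i) B x) y = 0" .
qed

text \<open>so(V) and sp(V) are self-normalizing in gl(V,V): an operator bracketing all skew
  operators into skew ones is skew, because its symmetrization commutes with all probes.\<close>

lemma skewV_self_normalizing: "{A \<in> glV p. \<forall>B\<in>skewV e p. opbr A B \<in> skewV e p} = skewV e p"
proof (intro equalityI subsetI)
  fix A assume "A \<in> {A \<in> glV p. \<forall>B\<in>skewV e p. opbr A B \<in> skewV e p}"
  hence A: "A \<in> glV p" and AB: "\<And>B. B \<in> skewV e p \<Longrightarrow> skew p (opbr A B)"
    using skewV_eq by auto
  then obtain ps where ps: "set ps \<subseteq> FS \<times> FS" and A_eq: "A = tensor_op p ps"
    unfolding glV_def by blast
  define A' where "A' = tensor_op p (adjoint_pairs e ps)"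
  have A': "A' \<in> glV p" unfolding A'_def glV_def using adjoint_pairs_FS[OF ps] by blast
  have "(\<lambda>x i. A x i + A' x i) = opzero"
  proof (rule probes_separate[OF skewV_probes glV_add[OF A A'] glV_opzero])
    fix B x assume B: "B \<in> skewV e p" and x: "x \<in> FS"
    have "opbr (\<lambda>x i. A x i + A' x i) B x = zv"
      using symmetrization_commutes[OF A A' _ _ _ AB[OF B] x] B skewV_eq
        adjoint_left[OF ps] adjoint_right[OF ps] unfolding A_eq A'_def by blast
    thus "opbr (\<lambda>x i. A x i + A' x i) B x = opbr opzero B x"
      using B skewV_eq glV_zero by (auto simp: opbr_def opzero_def)
  qed
  hence "\<forall>y\<in>FS. A' y = (\<lambda>i. - A y i)"
    by (auto simp: opzero_def fun_eq_iff eq_neg_iff_add_eq_0 add.commute)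
  hence "skew p A" using skew_iff_adjoint_neg[OF ps] unfolding A_eq A'_def by blast
  thus "A \<in> skewV e p" using A skewV_eq by blast
next
  fix A assume "A \<in> skewV e p"
  thus "A \<in> {A \<in> glV p. \<forall>B\<in>skewV e p. opbr A B \<in> skewV e p}"
    using skewV_eq glV_opbr skew_opbr by auto
qed

lemma normalizer_diag_skewV:
  assumes "0 < n"
  shows "normalizer n p (diagmap n ` skewV e p) = diagmap n ` skewV e p"
  using normalizer_diagmap[OF assms _ skewV_probes] skewV_self_normalizing skewV_eq by auto

end

lemma normalizer_diag_soV:
  assumes "0 < n" and "bilinear_pairing b" and "nondegenerate b"
    and symmetric: "\<forall>x\<in>FS. \<forall>y\<in>FS. b x y = b y x"
  shows "normalizer n b (diagmap n ` soV b) = diagmap n ` soV b"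
proof -
  interpret eps_pairing b 1
  proof unfold_locales
    show "b x y = 1 * b y x" if "x \<in> FS" "y \<in> FS" for x y
      using symmetric that by simp
  qed (use assms in simp_all)
  show ?thesis using normalizer_diag_skewV[OF assms(1)] by (simp add: soV_eq_skewV)
qed

lemma normalizer_diag_spV:
  assumes "0 < n" and "bilinear_pairing b" and "nondegenerate b"
    and antisymmetric: "\<forall>x\<in>FS. \<forall>y\<in>FS. b x y = - b y x"
  shows "normalizer n b (diagmap n ` spV b) = diagmap n ` spV b"
proof -
  interpret eps_pairing b "-1"
  proof unfold_locales
    show "b x y = -1 * b y x" if "x \<in> FS" "y \<in> FS" for x y
      using antisymmetric that by (metis mult_minus1)
  qed (use assms in simp_all)
  show ?thesis using normalizer_diag_skewV[OF assms(1)] by (simp add: spV_eq_skewV)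
qed

theorem lemma2p8:
  fixes n :: nat and p :: "vec \<Rightarrow> vec \<Rightarrow> complex"
  assumes "n > 0" and "bilinear_pairing p" and "nondegenerate p"
  shows "normalizer n p (diagmap n ` slV p) = diagmap n ` glV p
    \<and> (\<forall>b. bilinear_pairing b \<and> nondegenerate b \<and> (\<forall>x\<in>FS. \<forall>y\<in>FS. b x y = b y x)
          \<longrightarrow> normalizer n b (diagmap n ` soV b) = diagmap n ` soV b)
    \<and> (\<forall>b. bilinear_pairing b \<and> nondegenerate b \<and> (\<forall>x\<in>FS. \<forall>y\<in>FS. b x y = - b y x)
          \<longrightarrow> normalizer n b (diagmap n ` spV b) = diagmap n ` spV b)"
proof (intro conjI allI impI)
  interpret nondeg_pairing p
    using assms(2,3) by unfold_locales
  show "normalizer n p (diagmap n ` slV p) = diagmap n ` glV p"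
    using normalizer_diag_slV[OF assms(1)] .
qed (use normalizer_diag_soV normalizer_diag_spV assms(1) in blast)+

end
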